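(* Assume condition (ii)' with $\zeta$ having a finite exponential moment ($\mathbb E e^{u\zeta}<\infty$ for some $u>0$). Let $a,\varepsilon>0$ with $1/2-\varepsilon>2a$. There exist $t_0>0$ and $c>0$ such that for all $t>t_0$, all $d\le t^a$, all $\gamma\in(0,1/2-2a-\varepsilon)$ and all $x\in W_{t,\varepsilon}$, \[\Delta(x)\ge\Big(1-\frac{c}{t^\gamma}\Big)h(x).\]
   Context: Likelihood ratio order $U\le_{lr}W$: $\mathbf P(U\in A)\mathbf P(W\in B)\ge\mathbf P(U\in B)\mathbf P(W\in A)$ for measurable $A,B$ with $\sup A\le\inf B$. Condition (ii)' for a real random variable $X$: there is $\zeta$ with values in $[1,\infty)$ such that for all $\theta\ge0$, $(X-\theta)\mid\{X>\theta\}\le_{lr}\zeta$ and $-(X+\theta)\mid\{X<-\theta\}\le_{lr}\zeta$. With $\zeta_1,\dots,\zeta_{d-1}$ i.i.d. copies of $\zeta$, $\eta_1=0$, $\eta_j=\sum_{i<j}\zeta_i$, define $h(x)=\mathbb E\big[\prod_{1\le i<j\le d}(x_j-x_i+\eta_j-\eta_i)\big]$ and $\Delta(x)=\prod_{1\le i<j\le d}(x_j-x_i)$. $W_{t,\varepsilon}=\{x\in\mathbb R^d:x_{j+1}-x_j>t^{1/2-\varepsilon},1\le j<d\}$. *)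

theory Defs
  imports "HOL-Probability.Probability"
begin

text \<open>Scaling mu by a positive constant does not change the relation, so
  the conditional law of a random variable given an event may be replaced by the
  restricted (unnormalised) law.\<close>
definition lr_le :: "(real set \<Rightarrow> real) \<Rightarrow> (real set \<Rightarrow> real) \<Rightarrow> bool" where
  "lr_le mu nu \<longleftrightarrow> (\<forall>A\<in>sets borel. \<forall>B\<in>sets borel.
      (\<forall>a\<in>A. \<forall>b\<in>B. a \<le> b) \<longrightarrow> mu A * nu B \<ge> mu B * nu A)"

text \<open>Condition (ii)': X a real random variable on probability space M, Z the law of zeta.\<close>
definition cond_ii' :: "'a measure \<Rightarrow> ('a \<Rightarrow> real) \<Rightarrow> real measure \<Rightarrow> bool" where
  "cond_ii' M X Z \<longleftrightarrow>
     (\<forall>\<theta>\<ge>0. lr_le (\<lambda>A. measure M {\<omega>\<in>space M. X \<omega> > \<theta> \<and> X \<omega> - \<theta> \<in> A}) (measure Z)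
            \<and> lr_le (\<lambda>A. measure M {\<omega>\<in>space M. X \<omega> < -\<theta> \<and> -(X \<omega> + \<theta>) \<in> A}) (measure Z))"

definition Delta :: "nat \<Rightarrow> (nat \<Rightarrow> real) \<Rightarrow> real" where
  "Delta d x = (\<Prod>j<d. \<Prod>i<j. x j - x i)"

definition eta :: "(nat \<Rightarrow> real) \<Rightarrow> nat \<Rightarrow> real" where
  "eta z j = (\<Sum>i<j. z i)"

definition h :: "real measure \<Rightarrow> nat \<Rightarrow> (nat \<Rightarrow> real) \<Rightarrow> real" where
  "h Z d x = integral\<^sup>L (PiM {..<d-1} (\<lambda>_. Z))
      (\<lambda>z. \<Prod>j<d. \<Prod>i<j. x j - x i + eta z j - eta z i)"

definition W :: "nat \<Rightarrow> real \<Rightarrow> real \<Rightarrow> (nat \<Rightarrow> real) set" where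
  "W d t \<epsilon> = {x. \<forall>j. j + 1 < d \<longrightarrow> x (j+1) - x j > t powr (1/2 - \<epsilon>)}"

end

theory Submission
  imports Defs
begin

text \<open>If consecutive coordinates of \<open>x\<close> are at least \<open>g\<close> apart, then
  \<open>x j - x i \<ge> (j - i) g\<close>, while \<open>|\<eta> j - \<eta> i|\<close> is at most the sum of the \<open>|\<zeta> k|\<close>
  with \<open>i \<le> k < j\<close>. So each factor of \<open>h\<close> is at most
  \<open>(x j - x i) exp (\<Sum>{|\<zeta> k| | i \<le> k < j} / ((j - i) g))\<close>, and since every \<open>k\<close> lies
  between at most \<open>L\<close> pairs \<open>i < j\<close> with \<open>j - i = L\<close>, the product is at most
  \<open>\<Delta>(x) \<Prod>k. exp (d |\<zeta> k| / g)\<close>. By independence and \<open>E exp (s |\<zeta>|) \<le> 1 + s C\<close>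
  (for \<open>s \<le> u/2\<close>, where \<open>C = (2/u) E exp (u |\<zeta>|)\<close>) this gives
  \<open>h(x) \<le> \<Delta>(x) exp (d\<^sup>2 C / g)\<close>. On \<open>W d t \<epsilon>\<close> with \<open>d \<le> t powr a\<close> the exponent is
  at most \<open>C t powr (2 a - 1/2 + \<epsilon>)\<close>, and \<open>1 - q \<le> exp (-q)\<close> concludes.\<close>

definition spaced :: "nat \<Rightarrow> real \<Rightarrow> (nat \<Rightarrow> real) \<Rightarrow> bool" where
  "spaced d g x \<longleftrightarrow> (\<forall>j. Suc j < d \<longrightarrow> g \<le> x (Suc j) - x j)"

lemma W_imp_spaced: "x \<in> W d t \<epsilon> \<Longrightarrow> spaced d (t powr (1/2 - \<epsilon>)) x"
  by (auto simp: W_def spaced_def less_imp_le)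

lemma spaced_diff_ge:
  assumes "spaced d g x" "i \<le> j" "j < d"
  shows "real (j - i) * g \<le> x j - x i"
  using assms(2,3)
proof (induction j)
  case 0
  then show ?case by simp
next
  case (Suc j)
  show ?case
  proof (cases "i = Suc j")
    case False
    with Suc have "i \<le> j" and ih: "real (j - i) * g \<le> x j - x i" by simp_all
    moreover have "g \<le> x (Suc j) - x j" using assms(1) Suc.prems by (auto simp: spaced_def)
    moreover have "real (Suc j - i) = real (j - i) + 1" using \<open>i \<le> j\<close> by simp
    ultimately show ?thesis by (simp add: algebra_simps)
  qed simp
qed

lemma spaced_mono:
  assumes "spaced d g x" "0 \<le> g" "i \<le> j" "j < d"
  shows "x i \<le> x j"
  using spaced_diff_ge[OF assms(1,3,4)] assms(2) by (smt (verit) of_nat_0_le_iff mult_nonneg_nonneg)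

lemma Delta_nonneg: "spaced d g x \<Longrightarrow> 0 \<le> g \<Longrightarrow> 0 \<le> Delta d x"
  unfolding Delta_def by (intro prod_nonneg) (auto dest: spaced_mono[of d g x, OF _ _ less_imp_le])

lemma eta_diff: "i \<le> j \<Longrightarrow> eta z j - eta z i = (\<Sum>k\<in>{i..<j}. z k)"
  unfolding eta_def by (metis add_diff_cancel_left' atLeast0LessThan le0 sum.atLeastLessThan_concat)

lemma abs_add_le_mul_exp:
  fixes D e E c :: real
  assumes "0 < c" "c \<le> D" "\<bar>e\<bar> \<le> E"
  shows "\<bar>D + e\<bar> \<le> D * exp (E / c)"
proof -
  have "\<bar>D + e\<bar> \<le> D + E"
    using assms by linarith
  also have "\<dots> = D * (1 + E / D)"
    using assms by (simp add: field_simps)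
  also have "\<dots> \<le> D * (1 + E / c)"
    using assms by (intro mult_left_mono add_left_mono divide_left_mono) auto
  also have "\<dots> \<le> D * exp (E / c)"
    using assms by (intro mult_left_mono) (auto simp: exp_ge_add_one_self add.commute)
  finally show ?thesis .
qed

text \<open>A pair \<open>i < j\<close> with \<open>j - i = L\<close> straddles \<open>k\<close> for at most \<open>L\<close> choices of \<open>i\<close>;
  the map \<open>(j, i) \<mapsto> (j - i, k - i)\<close> makes this an injection into
  \<open>{(L, m). 1 \<le> L \<le> d, m < L}\<close>.\<close>
lemma sum_straddling_pairs_le:
  "(\<Sum>j<d. \<Sum>i<j. if i \<le> k \<and> k < j then 1 / real (j - i) else 0) \<le> real d"
proof -
  define S where "S = {(j, i). j < d \<and> i < j \<and> i \<le> k \<and> k < j}"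
  define \<phi> where "\<phi> = (\<lambda>(j::nat, i::nat). (j - i, k - i))"
  have "(\<Sum>j<d. \<Sum>i<j. if i \<le> k \<and> k < j then 1 / real (j - i) else 0)
      = (\<Sum>p\<in>(SIGMA j:{..<d}. {..<j}). if snd p \<le> k \<and> k < fst p then 1 / real (fst p - snd p) else 0)"
    by (subst sum.Sigma) (auto intro!: sum.cong split: prod.splits)
  also have "\<dots> = (\<Sum>p\<in>S. 1 / real (fst p - snd p))"
    by (subst sum.inter_filter[symmetric]) (auto simp: S_def intro!: sum.cong)
  also have "\<dots> = (\<Sum>q\<in>\<phi> ` S. 1 / real (fst q))"
    by (subst sum.reindex) (auto simp: inj_on_def S_def \<phi>_def intro!: sum.cong)
  also have "\<dots> \<le> (\<Sum>q\<in>(SIGMA L:{1..d}. {..<L}). 1 / real (fst q))"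
    by (rule sum_mono2) (auto simp: S_def \<phi>_def)
  also have "\<dots> = (\<Sum>L\<in>{1..d}. real L * (1 / real L))"
    using sum.Sigma[of "{1..d}" "\<lambda>L. {..<L}" "\<lambda>L i. 1 / real L"] by (simp add: split_beta)
  also have "\<dots> = real d" by simp
  finally show ?thesis .
qed

lemma abs_shifted_Vandermonde_le:
  assumes x: "spaced d g x" and g: "0 < g"
  shows "\<bar>\<Prod>j<d. \<Prod>i<j. x j - x i + eta z j - eta z i\<bar>
     \<le> Delta d x * exp (real d / g * (\<Sum>k<d-1. \<bar>z k\<bar>))"
proof -
  define n where "n = d - 1"
  define w where "w = (\<lambda>j i k. if i \<le> k \<and> k < j then 1 / real (j - i) else 0)"
  define R where "R = (\<lambda>j i. (\<Sum>k<d-1. \<bar>z k\<bar> * w j i k) / g)"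
  have factor: "\<bar>x j - x i + eta z j - eta z i\<bar> \<le> (x j - x i) * exp (R j i)"
    if "i < j" "j < d" for i j
  proof -
    have "\<bar>eta z j - eta z i\<bar> \<le> (\<Sum>k\<in>{i..<j}. \<bar>z k\<bar>)"
      using that by (simp add: eta_diff sum_abs)
    also have "\<dots> = (\<Sum>k<d-1. if i \<le> k \<and> k < j then \<bar>z k\<bar> else 0)"
      using that by (subst sum.inter_filter[symmetric]) (auto intro!: sum.cong)
    finally have "\<bar>(x j - x i) + (eta z j - eta z i)\<bar>
        \<le> (x j - x i) * exp ((\<Sum>k<d-1. if i \<le> k \<and> k < j then \<bar>z k\<bar> else 0) / (real (j - i) * g))"
      by (intro abs_add_le_mul_exp) (use spaced_diff_ge[OF x, of i j] that g in auto)
    then have "\<bar>x j - x i + eta z j - eta z i\<bar>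
        \<le> (x j - x i) * exp ((\<Sum>k<d-1. if i \<le> k \<and> k < j then \<bar>z k\<bar> else 0) / (real (j - i) * g))"
      by (simp add: add_diff_eq)
    also have "(\<Sum>k<d-1. if i \<le> k \<and> k < j then \<bar>z k\<bar> else 0) / (real (j - i) * g) = R j i"
      unfolding R_def w_def by (simp add: sum_divide_distrib) (intro sum.cong, auto)
    finally show ?thesis .
  qed
  have "(\<Sum>j<d. \<Sum>i<j. R j i) = (\<Sum>k<n. \<bar>z k\<bar> * (\<Sum>j<d. \<Sum>i<j. w j i k)) / g"
    unfolding R_def n_def[symmetric] by (simp add: sum_divide_distrib[symmetric] sum_distrib_left sum.swap[of _ "{..<n}"])
  also have "\<dots> \<le> (\<Sum>k<n. \<bar>z k\<bar> * real d) / g"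
    using g by (intro divide_right_mono sum_mono mult_left_mono) (auto simp: w_def sum_straddling_pairs_le)
  finally have exponent: "(\<Sum>j<d. \<Sum>i<j. R j i) \<le> real d / g * (\<Sum>k<d-1. \<bar>z k\<bar>)"
    by (simp add: n_def sum_distrib_left[symmetric] mult.commute)
  have "\<bar>\<Prod>j<d. \<Prod>i<j. x j - x i + eta z j - eta z i\<bar> = (\<Prod>j<d. \<Prod>i<j. \<bar>x j - x i + eta z j - eta z i\<bar>)"
    by (simp add: abs_prod)
  also have "\<dots> \<le> (\<Prod>j<d. \<Prod>i<j. (x j - x i) * exp (R j i))"
    by (intro prod_mono conjI factor prod_nonneg) auto
  also have "\<dots> = Delta d x * exp (\<Sum>j<d. \<Sum>i<j. R j i)"
    by (simp add: Delta_def prod.distrib exp_sum)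
  also have "\<dots> \<le> Delta d x * exp (real d / g * (\<Sum>k<d-1. \<bar>z k\<bar>))"
    using exponent Delta_nonneg[OF x] g by (intro mult_left_mono) auto
  finally show ?thesis .
qed

text \<open>From \<open>e\<^sup>v - 1 \<le> v e\<^sup>v\<close> with \<open>v = s|y| \<le> u|y|/2\<close> and \<open>|y| \<le> (2/u) e\<^bsup>u|y|/2\<^esup>\<close>.\<close>
lemma exp_mult_abs_le:
  fixes s u y :: real
  assumes "0 \<le> s" "s \<le> u / 2" "0 < u"
  shows "exp (s * \<bar>y\<bar>) \<le> 1 + s * (2 / u * exp (u * \<bar>y\<bar>))"
proof -
  define w where "w = \<bar>y\<bar>"
  have w: "0 \<le> w" by (simp add: w_def)
  have "exp (s * w) - 1 \<le> s * w * exp (s * w)"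
    using exp_ge_add_one_self[of "-(s * w)"] mult_right_mono[of "1 - s * w" "exp (-(s * w))" "exp (s * w)"]
    by (simp add: exp_minus field_simps)
  also have "\<dots> \<le> s * w * exp (u * w / 2)"
    using assms w mult_right_mono[of "s * 2" u w] by (intro mult_left_mono) (auto simp: field_simps)
  also have "\<dots> \<le> s * (2 / u * exp (u * w))"
  proof -
    have "u * w / 2 \<le> exp (u * w / 2)" using exp_ge_add_one_self[of "u * w / 2"] by linarith
    have "w * exp (u * w / 2) = (u * w / 2) * (2 / u * exp (u * w / 2))" using assms by (simp add: field_simps)
    also have "\<dots> \<le> exp (u * w / 2) * (2 / u * exp (u * w / 2))"
      using \<open>u * w / 2 \<le> exp (u * w / 2)\<close> assms by (intro mult_right_mono) auto
    also have "\<dots> = 2 / u * exp (u * w)"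
      using mult_exp_exp[of "u * w / 2" "u * w / 2"] by simp
    finally show ?thesis
      using assms mult_left_mono[of "w * exp (u * w / 2)" "2 / u * exp (u * w)" s] by (simp add: mult.assoc)
  qed
  finally show ?thesis by (simp add: w_def)
qed

lemma measurable_exp_mult_abs:
  fixes Z :: "real measure"
  assumes "sets Z = sets borel"
  shows "(\<lambda>y. exp (s * \<bar>y\<bar>)) \<in> borel_measurable Z"
  by (subst measurable_cong_sets[OF assms refl]) (intro borel_measurable_continuous_onI continuous_intros)

lemma
  fixes Z :: "real measure" and u s :: real
  assumes Z: "prob_space Z" "sets Z = sets borel" and u: "0 < u"
    and int: "integrable Z (\<lambda>y. exp (u * \<bar>y\<bar>))"
    and s: "0 \<le> s" "s \<le> u / 2"
  shows integrable_exp_mult_abs: "integrable Z (\<lambda>y. exp (s * \<bar>y\<bar>))"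
    and integral_exp_mult_abs_le:
      "(\<integral>y. exp (s * \<bar>y\<bar>) \<partial>Z) \<le> 1 + s * (2 / u * (\<integral>y. exp (u * \<bar>y\<bar>) \<partial>Z))"
proof -
  interpret prob_space Z by (rule Z)
  have bound: "integrable Z (\<lambda>y. 1 + s * (2 / u * exp (u * \<bar>y\<bar>)))"
    using int by auto
  show exp_int: "integrable Z (\<lambda>y. exp (s * \<bar>y\<bar>))"
    by (rule Bochner_Integration.integrable_bound[OF bound measurable_exp_mult_abs[OF Z(2)]])
       (use exp_mult_abs_le[OF s u] s u in \<open>auto intro!: AE_I2\<close>)
  have "(\<integral>y. exp (s * \<bar>y\<bar>) \<partial>Z) \<le> (\<integral>y. 1 + s * (2 / u * exp (u * \<bar>y\<bar>)) \<partial>Z)"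
    by (intro integral_mono exp_int bound exp_mult_abs_le s u)
  also have "\<dots> = 1 + s * (2 / u * (\<integral>y. exp (u * \<bar>y\<bar>) \<partial>Z))"
    using int by (simp add: prob_space)
  finally show "(\<integral>y. exp (s * \<bar>y\<bar>) \<partial>Z) \<le> 1 + s * (2 / u * (\<integral>y. exp (u * \<bar>y\<bar>) \<partial>Z))" .
qed

lemma integrable_exp_mult_abs_of_nonneg:
  fixes Z :: "real measure"
  assumes "sets Z = sets borel" "AE y in Z. 0 \<le> y" "integrable Z (\<lambda>y. exp (u * y))"
  shows "integrable Z (\<lambda>y. exp (u * \<bar>y\<bar>))"
proof (subst integrable_cong_AE[OF measurable_exp_mult_abs[OF assms(1)]])
  show "(\<lambda>y. exp (u * y)) \<in> borel_measurable Z"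
    by (subst measurable_cong_sets[OF assms(1) refl]) (intro borel_measurable_continuous_onI continuous_intros)
  show "AE y in Z. exp (u * \<bar>y\<bar>) = exp (u * y)"
    using assms(2) by eventually_elim auto
qed (rule assms(3))

lemma h_le_Delta_mult_exp:
  fixes Z :: "real measure" and u g :: real
  assumes Z: "prob_space Z" "sets Z = sets borel" and u: "0 < u"
    and int: "integrable Z (\<lambda>y. exp (u * \<bar>y\<bar>))"
    and x: "spaced d g x" and g: "0 < g" and small: "real d / g \<le> u / 2"
  shows "h Z d x \<le> Delta d x * exp (real d ^ 2 / g * (2 / u * (\<integral>y. exp (u * \<bar>y\<bar>) \<partial>Z)))"
proof -
  define n where "n = d - 1"
  define s where "s = real d / g"
  define C where "C = 2 / u * (\<integral>y. exp (u * \<bar>y\<bar>) \<partial>Z)"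
  define P where "P = PiM {..<n} (\<lambda>_. Z)"
  define G where "G = (\<lambda>z. \<Prod>k<n. exp (s * \<bar>z k\<bar>))"
  interpret product_prob_space "\<lambda>_. Z" using product_prob_spaceI[of "\<lambda>_. Z"] Z(1) by simp
  have s: "0 \<le> s" "s \<le> u / 2" using g small by (simp_all add: s_def)
  have C: "0 \<le> C" unfolding C_def using u by (intro mult_nonneg_nonneg integral_nonneg_AE) auto
  have G_int: "integrable P G"
    unfolding P_def G_def by (intro product_integrable_prod integrable_exp_mult_abs[OF Z u int s]) auto
  have D: "0 \<le> Delta d x" using Delta_nonneg[OF x] g by simp
  have "h Z d x \<le> (\<integral>z. Delta d x * G z \<partial>P)"
    unfolding h_def P_def[symmetric] n_def[symmetric]
  proof (intro integral_mono' AE_I2)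
    show "integrable P (\<lambda>z. Delta d x * G z)" using G_int by simp
    fix z
    show "0 \<le> Delta d x * G z" using D by (simp add: G_def prod_nonneg)
    have "(\<Prod>j<d. \<Prod>i<j. x j - x i + eta z j - eta z i) \<le> Delta d x * exp (s * (\<Sum>k<n. \<bar>z k\<bar>))"
      using abs_shifted_Vandermonde_le[OF x g, of z] by (simp add: s_def n_def)
    also have "\<dots> = Delta d x * G z" by (simp add: G_def sum_distrib_left exp_sum)
    finally show "(\<Prod>j<d. \<Prod>i<j. x j - x i + eta z j - eta z i) \<le> Delta d x * G z" .
  qed
  also have "\<dots> = Delta d x * (\<integral>y. exp (s * \<bar>y\<bar>) \<partial>Z) ^ n"
    unfolding integral_mult_right_zero P_def G_def by (subst product_integral_prod) (auto intro: integrable_exp_mult_abs[OF Z u int s])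
  also have "\<dots> \<le> Delta d x * exp (s * C) ^ n"
  proof -
    have "(\<integral>y. exp (s * \<bar>y\<bar>) \<partial>Z) \<le> exp (s * C)"
      using integral_exp_mult_abs_le[OF Z u int s] exp_ge_add_one_self[of "s * C"] unfolding C_def by linarith
    then show ?thesis by (intro mult_left_mono D power_mono integral_nonneg_AE) auto
  qed
  also have "\<dots> \<le> Delta d x * exp (real d * s * C)"
  proof -
    have "real n * (s * C) \<le> real d * (s * C)"
      using s C by (intro mult_right_mono) (auto simp: n_def)
    then show ?thesis by (intro mult_left_mono D) (simp_all add: exp_of_nat_mult[symmetric] mult.assoc)
  qed
  finally show ?thesis by (simp add: s_def C_def power2_eq_square)
qed

lemma h_nonneg:
  assumes "prob_space Z" "AE y in Z. 0 \<le> y" "spaced d g x" "0 \<le> g"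
  shows "0 \<le> h Z d x"
  unfolding h_def
proof (intro integral_nonneg_AE)
  interpret product_prob_space "\<lambda>_. Z" using product_prob_spaceI[of "\<lambda>_. Z"] assms(1) by simp
  have "AE z in PiM {..<d-1} (\<lambda>_. Z). \<forall>k\<in>{..<d-1}. 0 \<le> z k"
    by (intro AE_finite_allI AE_PiM_component assms(1,2)) auto
  then show "AE z in PiM {..<d-1} (\<lambda>_. Z). 0 \<le> (\<Prod>j<d. \<Prod>i<j. x j - x i + eta z j - eta z i)"
  proof eventually_elim
    case (elim z)
    have "0 \<le> x j - x i + (eta z j - eta z i)" if "i < j" "j < d" for i j
    proof -
      have "0 \<le> eta z j - eta z i"
        using that elim by (auto simp: eta_diff intro!: sum_nonneg)
      then show ?thesis using spaced_mono[OF assms(3,4), of i j] that by simp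
    qed
    then show ?case by (intro prod_nonneg) (auto simp: add_diff_eq)
  qed
qed

lemma one_sub_mult_le_of_le_mult_exp:
  fixes H D p q :: real
  assumes "0 \<le> H" "0 \<le> D" "H \<le> D * exp p" "p \<le> q"
  shows "(1 - q) * H \<le> D"
proof -
  have "(1 - q) * H \<le> exp (- q) * H"
    using assms(1) exp_ge_add_one_self[of "- q"] by (intro mult_right_mono) auto
  also have "\<dots> \<le> exp (- q) * (D * exp q)"
    using assms by (intro mult_left_mono order.trans[OF assms(3)]) auto
  also have "\<dots> = D" by (simp add: exp_minus field_simps)
  finally show ?thesis .
qed

lemma div_powr_le_inverse_powr:
  fixes t y a b :: real
  assumes "0 < t" "y \<le> t powr a"
  shows "y / t powr b \<le> 1 / t powr (b - a)"
proof -
  have "y / t powr b \<le> t powr a / t powr b"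
    using assms by (intro divide_right_mono) auto
  also have "\<dots> = 1 / t powr (b - a)"
    using assms(1) by (simp add: powr_diff powr_minus_divide[symmetric])
  finally show ?thesis .
qed

lemma less_powr_of_root_less:
  fixes c e t :: real
  assumes "0 < e" "0 < c" "c powr (1 / e) < t"
  shows "c < t powr e"
proof -
  have "(c powr (1 / e)) powr e < t powr e"
    using assms by (intro powr_less_mono2) auto
  then show ?thesis using assms by (simp add: powr_powr)
qed

lemma div_powr_le_half_if_large:
  fixes u a b t y :: real
  assumes "0 < u" "a < b" "0 < t" "(2 / u) powr (1 / (b - a)) < t" "y \<le> t powr a"
  shows "y / t powr b \<le> u / 2"
proof -
  have "2 / u < t powr (b - a)" using assms by (intro less_powr_of_root_less) auto
  then have "1 / t powr (b - a) < u / 2" using assms(1,3) by (simp add: field_simps)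
  then show ?thesis using div_powr_le_inverse_powr[OF assms(3,5), of b] by linarith
qed

lemma square_div_powr_le_inverse_powr:
  fixes t y a b \<gamma> :: real
  assumes "1 \<le> t" "0 \<le> y" "y \<le> t powr a" "\<gamma> \<le> b - 2 * a"
  shows "y ^ 2 / t powr b \<le> 1 / t powr \<gamma>"
proof -
  have "y ^ 2 \<le> (t powr a) ^ 2" using assms by (intro power_mono) auto
  then have "y ^ 2 / t powr b \<le> 1 / t powr (b - 2 * a)"
    using assms(1) by (intro div_powr_le_inverse_powr) (auto simp: powr_power mult.commute)
  also have "\<dots> \<le> 1 / t powr \<gamma>"
    using assms by (intro divide_left_mono powr_mono) auto
  finally show ?thesis .
qed

theorem lemma4p1:
  fixes M :: "'a measure" and X :: "'a \<Rightarrow> real" and Z :: "real measure"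
    and a \<epsilon> :: real
  assumes "prob_space M" and "X \<in> borel_measurable M"
    and "prob_space Z" and "sets Z = sets borel"
    and "AE z in Z. 1 \<le> z"
    and "cond_ii' M X Z"
    and "\<exists>u>0. integrable Z (\<lambda>z. exp (u * z))"
    and "a > 0" and "\<epsilon> > 0" and "1/2 - \<epsilon> > 2 * a"
  shows "\<exists>t0>0. \<exists>c>0. \<forall>t>t0. \<forall>d::nat. real d \<le> t powr a \<longrightarrow>
           (\<forall>\<gamma>. 0 < \<gamma> \<and> \<gamma> < 1/2 - 2*a - \<epsilon> \<longrightarrow>
             (\<forall>x\<in>W d t \<epsilon>. Delta d x \<ge> (1 - c / t powr \<gamma>) * h Z d x))"
proof -
  \<comment> \<open>Only the law \<open>Z\<close> of \<open>\<zeta>\<close> enters \<open>h\<close>.\<close>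
  obtain u where u: "0 < u" and "integrable Z (\<lambda>z. exp (u * z))" using assms(7) by blast
  moreover have "AE z in Z. 0 \<le> z" using assms(5) by eventually_elim auto
  ultimately have int: "integrable Z (\<lambda>y. exp (u * \<bar>y\<bar>))"
    using integrable_exp_mult_abs_of_nonneg assms(4) by blast
  define b where "b = 1/2 - \<epsilon>"
  define C where "C = 2 / u * (\<integral>y. exp (u * \<bar>y\<bar>) \<partial>Z)"
  have C: "0 \<le> C" unfolding C_def using u by (intro mult_nonneg_nonneg integral_nonneg_AE) auto
  define t0 where "t0 = max 1 ((2 / u) powr (1 / (b - a)))"
  have "(1 - (C + 1) / t powr \<gamma>) * h Z d x \<le> Delta d x"
    if t: "t0 < t" and d: "real d \<le> t powr a" and \<gamma>: "0 < \<gamma>" "\<gamma> < 1/2 - 2*a - \<epsilon>"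
      and x: "x \<in> W d t \<epsilon>" for t d \<gamma> x
  proof -
    have t1: "1 < t" using t by (simp add: t0_def)
    have small: "real d / t powr b \<le> u / 2"
      using t d u assms(8,10) by (intro div_powr_le_half_if_large) (auto simp: t0_def b_def)
    have "real d ^ 2 / t powr b * C \<le> 1 / t powr \<gamma> * C"
      using t1 d \<gamma> C by (intro mult_right_mono square_div_powr_le_inverse_powr) (auto simp: b_def)
    also have "\<dots> \<le> (C + 1) / t powr \<gamma>" by (simp add: divide_right_mono)
    finally have exponent: "real d ^ 2 / t powr b * C \<le> (C + 1) / t powr \<gamma>" .
    have spaced: "spaced d (t powr b) x" using W_imp_spaced[OF x] by (simp add: b_def)
    have "h Z d x \<le> Delta d x * exp (real d ^ 2 / t powr b * C)"
      unfolding C_def using t1 by (intro h_le_Delta_mult_exp[OF assms(3,4) u int spaced _ small]) simp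
    then show ?thesis
      using h_nonneg[OF assms(3) \<open>AE z in Z. 0 \<le> z\<close> spaced] Delta_nonneg[OF spaced] exponent
      by (intro one_sub_mult_le_of_le_mult_exp) simp_all
  qed
  moreover have "0 < t0" "0 < C + 1" using C by (auto simp: t0_def)
  ultimately show ?thesis by blast
qed

end
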